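(* For every ranking profile $R$ over $m\geq 2$ candidates, every ranking $\rhd$ chosen by the Chamberlin-Courant SWF satisfies unanimous justified representation (uJR) for $R$, i.e., $u(\succ,\rhd)\geq 1$ for every $\succ\in\mathcal{R}$ with $R(\succ)\geq 1/\binom{m}{2}$.
   Context: Let $C=\{x_1,\dots,x_m\}$ be a set of $m$ candidates. A ranking is a strict linear order over $C$; $\mathcal{R}$ denotes the set of all rankings over $C$. A ranking profile is a function $R:\mathcal{R}\to[0,1]$ with $\sum_{\succ\in\mathcal{R}}R(\succ)=1$. For rankings $\succ,\rhd$, $u(\succ,\rhd)=|\{(x,y)\in C^2: x\succ y \text{ and } x\rhd y\}|$. Let $s:\mathbb{N}_0\to\mathbb{R}$ with $s(0)=0$ and $s(k)=1$ for $k>0$. The Chamberlin-Courant SWF chooses a ranking $\rhd\in\mathcal{R}$ maximizing $\sum_{\succ\in\mathcal{R}}R(\succ)\,s(u(\succ,\rhd))$ (ties broken arbitrarily). *)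

theory Defs
  imports Complex_Main "HOL-Library.Cardinality"
begin

text \<open>Candidates are the elements of a finite type 'a; a ranking is a strict
linear order on all candidates, represented as the relation of pairs (x,y) with x ranked above y.\<close>

definition rankings :: "('a \<times> 'a) set set" where
  "rankings = {r. strict_linear_order_on UNIV r}"

definition agree :: "('a \<times> 'a) set \<Rightarrow> ('a \<times> 'a) set \<Rightarrow> nat" where
  "agree r t = card {(x, y). (x, y) \<in> r \<and> (x, y) \<in> t}"

definition s_cc :: "nat \<Rightarrow> real" where
  "s_cc k = (if k = 0 then 0 else 1)"

definition ranking_profile :: "(('a \<times> 'a) set \<Rightarrow> real) \<Rightarrow> bool" where
  "ranking_profile R \<longleftrightarrow> (\<forall>r\<in>rankings. 0 \<le> R r \<and> R r \<le> 1) \<and> (\<Sum>r\<in>rankings. R r) = 1"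

definition cc_score :: "(('a \<times> 'a) set \<Rightarrow> real) \<Rightarrow> ('a \<times> 'a) set \<Rightarrow> real" where
  "cc_score R t = (\<Sum>r\<in>rankings. R r * s_cc (agree r t))"

text \<open>Rankings chosen by the Chamberlin-Courant SWF (all maximizers; ties arbitrary).\<close>
definition cc_chosen :: "(('a \<times> 'a) set \<Rightarrow> real) \<Rightarrow> ('a \<times> 'a) set \<Rightarrow> bool" where
  "cc_chosen R t \<longleftrightarrow> t \<in> rankings \<and> (\<forall>t'\<in>rankings. cc_score R t' \<le> cc_score R t)"

end

theory Submission
  imports Defs "HOL-Combinatorics.Multiset_Permutations"
begin

text \<open>If a chosen ranking \<open>t\<close> disagreed completely with a ranking \<open>r\<close>, then \<open>t\<close> would be the
reversal of \<open>r\<close>. The reversal of any ranking \<open>r'\<close> has Chamberlin-Courant score exactly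
\<open>1 - R r'\<close>, since \<open>r'\<close> is the only ranking sharing no pair with it; so optimality of \<open>t\<close>
forces \<open>R r\<close> to be the least weight of the profile. Hence \<open>R r\<close> is at most one over
the number of rankings, so at most \<open>1 / m!\<close>, which is below \<open>1 / (m choose 2)\<close> for \<open>m \<ge> 2\<close>.\<close>

lemma converse_in_rankings: "t \<in> rankings \<Longrightarrow> converse t \<in> rankings"
  by (auto simp: rankings_def strict_linear_order_on_def total_on_def irrefl_def trans_def)

lemma agree_eq_0_iff_converse:
  fixes r t :: "('a::finite \<times> 'a) set"
  assumes r: "r \<in> rankings" and t: "t \<in> rankings"
  shows "agree r t = 0 \<longleftrightarrow> r = converse t"
proof -
  have r_lin: "irrefl r" "total_on UNIV r" "trans r" and t_lin: "irrefl t" "total_on UNIV t"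
    using r t by (auto simp: rankings_def strict_linear_order_on_def)
  have "agree r t = 0 \<longleftrightarrow> r \<inter> t = {}"
    by (simp add: agree_def Int_def)
  also have "\<dots> \<longleftrightarrow> r = converse t"
  proof
    assume disj: "r \<inter> t = {}"
    show "r = converse t"
    proof (intro set_eqI iffI; clarify)
      fix x y assume xy: "(x, y) \<in> r"
      with r_lin(1) have "x \<noteq> y"
        by (auto simp: irrefl_def)
      with xy disj t_lin(2) show "(y, x) \<in> t"
        by (auto simp: total_on_def)
    next
      fix x y assume yx: "(y, x) \<in> t"
      with t_lin(1) have "x \<noteq> y"
        by (auto simp: irrefl_def)
      with yx disj r_lin(2) show "(x, y) \<in> r"
        by (auto simp: total_on_def)
    qed
  next
    assume "r = converse t"
    with r_lin(1,3) show "r \<inter> t = {}"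
      by (auto simp: irrefl_def dest: transD)
  qed
  finally show ?thesis .
qed

lemma cc_score_converse:
  fixes R :: "('a::finite \<times> 'a) set \<Rightarrow> real"
  assumes R: "ranking_profile R" and r: "r \<in> rankings"
  shows "cc_score R (converse r) = 1 - R r"
proof -
  have conv: "converse r \<in> rankings"
    using r by (rule converse_in_rankings)
  have "cc_score R (converse r) = (\<Sum>r'\<in>rankings. R r' - (if r' = r then R r' else 0))"
    unfolding cc_score_def
    by (intro sum.cong refl) (simp add: s_cc_def agree_eq_0_iff_converse[OF _ conv])
  also have "\<dots> = 1 - R r"
    using R r by (simp add: sum_subtractf ranking_profile_def)
  finally show ?thesis .
qed

lemma cc_chosen_converse_minimal_weight:
  fixes R :: "('a::finite \<times> 'a) set \<Rightarrow> real"
  assumes R: "ranking_profile R" and r: "r \<in> rankings"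
    and chosen: "cc_chosen R (converse r)" and r': "r' \<in> rankings"
  shows "R r \<le> R r'"
proof -
  have "1 - R r' = cc_score R (converse r')"
    using cc_score_converse[OF R r'] by simp
  also have "\<dots> \<le> cc_score R (converse r)"
    using chosen converse_in_rankings[OF r'] by (simp add: cc_chosen_def)
  also have "\<dots> = 1 - R r"
    by (rule cc_score_converse[OF R r])
  finally show ?thesis by simp
qed

lemma cc_chosen_converse_weight_bound:
  fixes R :: "('a::finite \<times> 'a) set \<Rightarrow> real"
  assumes R: "ranking_profile R" and r: "r \<in> rankings" and chosen: "cc_chosen R (converse r)"
  shows "real (card (rankings :: ('a \<times> 'a) set set)) * R r \<le> 1"
proof -
  have "real (card (rankings :: ('a \<times> 'a) set set)) * R r \<le> (\<Sum>r'\<in>rankings. R r')"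
    by (intro sum_bounded_below cc_chosen_converse_minimal_weight[OF R r chosen])
  also have "\<dots> = 1"
    using R by (simp add: ranking_profile_def)
  finally show ?thesis .
qed

definition list_ranking :: "'a list \<Rightarrow> ('a \<times> 'a) set" where
  "list_ranking xs = {(xs ! i, xs ! j) | i j. i < j \<and> j < length xs}"

lemma list_ranking_in_rankings:
  assumes "xs \<in> permutations_of_set (UNIV :: 'a set)"
  shows "list_ranking xs \<in> rankings"
proof -
  have dist: "distinct xs" and all: "set xs = UNIV"
    using assms by (auto simp: permutations_of_set_def)
  have "trans (list_ranking xs)"
  proof (rule transI)
    fix x y z assume "(x, y) \<in> list_ranking xs" "(y, z) \<in> list_ranking xs"
    then obtain i j k l where "i < j" "j < length xs" "k < l" "l < length xs"
      and "x = xs ! i" "y = xs ! j" "y = xs ! k" "z = xs ! l"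
      unfolding list_ranking_def by blast
    moreover from calculation have "j = k"
      using dist by (simp add: nth_eq_iff_index_eq)
    ultimately have "i < l" "l < length xs" "x = xs ! i" "z = xs ! l"
      by auto
    then show "(x, z) \<in> list_ranking xs"
      unfolding list_ranking_def by blast
  qed
  moreover have "irrefl (list_ranking xs)"
    using dist by (auto simp: irrefl_def list_ranking_def nth_eq_iff_index_eq)
  moreover have "total_on UNIV (list_ranking xs)"
  proof (rule total_onI)
    fix x y :: 'a assume "x \<noteq> y"
    obtain i j where "i < length xs" "x = xs ! i" "j < length xs" "y = xs ! j"
      using all by (metis UNIV_I in_set_conv_nth)
    with \<open>x \<noteq> y\<close> show "(x, y) \<in> list_ranking xs \<or> (y, x) \<in> list_ranking xs"
      unfolding list_ranking_def by (cases i j rule: linorder_cases) auto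
  qed
  ultimately show ?thesis
    by (simp add: rankings_def strict_linear_order_on_def)
qed

text \<open>The list is recovered from its ranking: the \<open>i\<close>-th entry has exactly \<open>i\<close> predecessors.\<close>

lemma card_predecessors_list_ranking:
  assumes "distinct xs" "i < length xs"
  shows "card {y. (y, xs ! i) \<in> list_ranking xs} = i"
proof -
  have "{y. (y, xs ! i) \<in> list_ranking xs} = (!) xs ` {..<i}"
    using assms by (auto simp: list_ranking_def nth_eq_iff_index_eq)
  moreover have "inj_on ((!) xs) {..<i}"
    using assms by (auto simp: inj_on_def nth_eq_iff_index_eq)
  ultimately show ?thesis
    by (simp add: card_image)
qed

lemma inj_on_list_ranking: "inj_on list_ranking (permutations_of_set A)"
proof (rule inj_onI)
  fix xs ys assume xs: "xs \<in> permutations_of_set A" and ys: "ys \<in> permutations_of_set A"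
    and eq: "list_ranking xs = list_ranking ys"
  have dist: "distinct xs" "distinct ys" and sets: "set xs = set ys"
    using xs ys by (auto simp: permutations_of_set_def)
  show "xs = ys"
  proof (rule nth_equalityI)
    show "length xs = length ys"
      using dist sets by (metis distinct_card)
    fix i assume i: "i < length xs"
    obtain k where k: "k < length ys" "ys ! k = xs ! i"
      using sets i by (metis in_set_conv_nth nth_mem)
    have "i = card {y. (y, xs ! i) \<in> list_ranking xs}"
      using card_predecessors_list_ranking[OF dist(1) i] by simp
    also have "\<dots> = k"
      using card_predecessors_list_ranking[OF dist(2) k(1)] eq k(2) by simp
    finally show "xs ! i = ys ! i"
      using k(2) by simp
  qed
qed

lemma fact_card_le_card_rankings: "fact CARD('a::finite) \<le> card (rankings :: ('a \<times> 'a) set set)"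
proof -
  have "fact CARD('a) = card (list_ranking ` permutations_of_set (UNIV :: 'a set))"
    by (simp add: card_image inj_on_list_ranking)
  also have "\<dots> \<le> card (rankings :: ('a \<times> 'a) set set)"
    by (intro card_mono) (auto intro: list_ranking_in_rankings)
  finally show ?thesis .
qed

lemma choose_two_less_fact:
  assumes "2 \<le> n"
  shows "n choose 2 < fact n"
proof -
  have "fact 2 * fact (n - 2) * (n choose 2) = fact n"
    using assms by (rule binomial_fact_lemma)
  moreover have "0 < n choose 2"
    using assms by simp
  moreover have "(1::nat) < fact 2 * fact (n - 2)"
    using fact_gt_zero[of "n - 2", where 'a = nat] by (simp only: fact_2)
  ultimately show ?thesis
    by (metis mult_less_cancel2 mult_1)
qed

lemma choose_two_less_card_rankings:
  assumes "2 \<le> CARD('a::finite)"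
  shows "CARD('a) choose 2 < card (rankings :: ('a \<times> 'a) set set)"
  using choose_two_less_fact[OF assms] fact_card_le_card_rankings[where 'a = 'a] by linarith

theorem mainTheorem2:
  fixes R :: "('a::finite \<times> 'a) set \<Rightarrow> real" and t :: "('a \<times> 'a) set"
  assumes "CARD('a) \<ge> 2"
    and "ranking_profile R"
    and "cc_chosen R t"
  shows "\<forall>r\<in>rankings. R r \<ge> 1 / real (CARD('a) choose 2) \<longrightarrow> agree r t \<ge> 1"
proof (intro ballI impI)
  fix r :: "('a \<times> 'a) set"
  assume r: "r \<in> rankings" and heavy: "R r \<ge> 1 / real (CARD('a) choose 2)"
  show "agree r t \<ge> 1"
  proof (rule ccontr)
    assume "\<not> agree r t \<ge> 1"
    then have "agree r t = 0"
      by simp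
    then have "r = converse t"
      using agree_eq_0_iff_converse[OF r] assms(3) by (simp add: cc_chosen_def)
    then have "cc_chosen R (converse r)"
      using assms(3) by simp
    let ?N = "real (card (rankings :: ('a \<times> 'a) set set))" and ?c = "real (CARD('a) choose 2)"
    have c_pos: "0 < ?c"
      using assms(1) by simp
    have "1 \<le> ?c * R r"
      using heavy c_pos by (simp add: field_simps)
    also have "\<dots> < ?N * R r"
      using choose_two_less_card_rankings[OF assms(1)] heavy c_pos
      by (intro mult_strict_right_mono) (auto intro: less_le_trans[OF _ heavy])
    also have "\<dots> \<le> 1"
      using cc_chosen_converse_weight_bound[OF assms(2) r \<open>cc_chosen R (converse r)\<close>] .
    finally show False
      by simp
  qed
qed

end
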